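(* Let $1\le d\le N$ be integers. A real matrix $\lambda=(\lambda_{i,n})\in\mathbb{R}^{d\times(N+1)}$ (rows $1\le i\le d$, columns $0\le n\le N$) lies in $\Lambda_{N,d}$ if and only if it satisfies all of the following: (C1) $\lambda_{i,n}=0$ whenever $i>n$; (C2) $\lambda_{i,n}=N$ whenever $i<n+d-N+1$; (C3) $\sum_{i=1}^d\lambda_{i,n}=dn$ for $0<n<N$; (C4) $\lambda_{i,n}\le\lambda_{i,n+1}$ for $1\le i\le d$ and $i\le n<N-d+i-1$; (C5) $\lambda_{i,n}\le\lambda_{i-1,n-1}$ for $1<i\le d$ and $i\le n<N-d+i$; (C6) $\lambda_{d,d}\ge 0$; (C7) $\lambda_{1,N-d}\le N$.
   Context: For integers $0\le d\le N$, $\Lambda_{N,d}\subseteq\mathbb{R}^{d\times(N+1)}$ denotes the set of real matrices $\lambda=(\lambda_{i,n})$, with rows indexed by $1\le i\le d$ and columns indexed by $0\le n\le N$, satisfying: $\lambda_{i,0}=0$ for $1\le i\le d$; $\lambda_{i,N}=N$ for $1\le i\le d$; $\sum_{i=1}^d\lambda_{i,n}=dn$ for $0\le n\le N$; $\lambda_{i,n}\le\lambda_{i,n+1}$ for $1\le i\le d$, $0\le n<N$ (horizontal inequalities); $\lambda_{i,n}\le\lambda_{i-1,n-1}$ for $1<i\le d$, $0<n\le N$ (diagonal inequalities). (This is the polytope of eigensteps of equal norm tight frames of $N$ vectors in $d$ dimensions with squared norms $d$.) *)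

theory Defs
  imports Main Complex_Main
begin

text \<open>A real matrix with rows 1..d and columns 0..N is represented by a function
  lam :: nat => nat => real, where lam i n is the entry in row i, column n.
  Only entries with 1 <= i <= d and 0 <= n <= N are ever consulted.\<close>

definition eigensteps :: "nat \<Rightarrow> nat \<Rightarrow> (nat \<Rightarrow> nat \<Rightarrow> real) \<Rightarrow> bool" where
  "eigensteps N d lam \<longleftrightarrow>
     (\<forall>i\<in>{1..d}. lam i 0 = 0) \<and>
     (\<forall>i\<in>{1..d}. lam i N = real N) \<and>
     (\<forall>n\<in>{0..N}. (\<Sum>i=1..d. lam i n) = real d * real n) \<and>
     (\<forall>i\<in>{1..d}. \<forall>n<N. lam i n \<le> lam i (n+1)) \<and>
     (\<forall>i\<in>{2..d}. \<forall>n\<in>{1..N}. lam i n \<le> lam (i-1) (n-1))"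

end

theory Submission
  imports Defs
begin

text \<open>Entries of eigensteps increase along rows and along diagonals towards the upper left.
  Chasing a diagonal back to column 0 forces every entry strictly below the main diagonal
  to vanish, and chasing one forward to column N forces the upper right triangle to equal N.
  Conversely, an interior entry is bounded above by a diagonal followed by row 1 up to
  the entry (1, N - d), and below by a diagonal followed by row d down to the entry (d, d);
  so (C6) and (C7) keep every entry in [0, N], which makes all the inequalities touching the
  two forced regions automatic.\<close>

lemma diagonal_antimono:
  fixes lam :: "nat \<Rightarrow> nat \<Rightarrow> real"
  assumes "\<And>k. k < K \<Longrightarrow> lam (j + Suc k) (m + Suc k) \<le> lam (j + k) (m + k)"
  shows "lam (j + K) (m + K) \<le> lam j m"
  using lift_Suc_antimono_le_ivl[of "{..<K}" "\<lambda>k. lam (j + k) (m + k)" 0 K] assms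
  by (simp add: atLeast0LessThan)

lemma eigensteps_entry_bounds:
  assumes E: "eigensteps N d lam" and i: "i \<in> {1..d}" and n: "n \<le> N"
  shows "0 \<le> lam i n \<and> lam i n \<le> real N"
proof -
  have row: "\<And>m. m \<in> {..<N} \<Longrightarrow> lam i m \<le> lam i (Suc m)"
    using E i unfolding eigensteps_def by auto
  have "lam i 0 \<le> lam i n" "lam i n \<le> lam i N"
    using lift_Suc_mono_le_ivl[of "{..<N}" "lam i", OF row] n by (auto simp: subset_eq)
  moreover have "lam i 0 = 0" "lam i N = real N"
    using E i unfolding eigensteps_def by auto
  ultimately show ?thesis by simp
qed

lemma eigensteps_diagonal_step:
  assumes "eigensteps N d lam" "1 \<le> i" "i < d" "n < N"
  shows "lam (Suc i) (Suc n) \<le> lam i n"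
proof -
  have "\<forall>i\<in>{2..d}. \<forall>n\<in>{1..N}. lam i n \<le> lam (i - 1) (n - 1)"
    using assms(1) unfolding eigensteps_def by blast
  moreover have "Suc i \<in> {2..d}" "Suc n \<in> {1..N}"
    using assms(2-4) by auto
  ultimately show ?thesis
    by fastforce
qed

lemma eigensteps_below_diagonal:
  assumes E: "eigensteps N d lam" and "i \<le> d" "n \<le> N" "n < i"
  shows "lam i n = 0"
proof -
  have "lam (i - n + n) (0 + n) \<le> lam (i - n) 0"
    by (rule diagonal_antimono) (use assms in \<open>auto intro: eigensteps_diagonal_step[OF E]\<close>)
  moreover have "i - n \<in> {1..d}"
    using assms by auto
  then have "lam (i - n) 0 = 0"
    using E unfolding eigensteps_def by blast
  ultimately show ?thesis
    using eigensteps_entry_bounds[OF E, of i n] assms by auto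
qed

lemma eigensteps_upper_triangle:
  assumes E: "eigensteps N d lam" and "1 \<le> i" "n \<le> N" "i + N \<le> n + d"
  shows "lam i n = real N"
proof -
  have "lam (i + (N - n)) (n + (N - n)) \<le> lam i n"
    by (rule diagonal_antimono) (use assms in \<open>auto intro: eigensteps_diagonal_step[OF E]\<close>)
  moreover have "i + (N - n) \<in> {1..d}"
    using assms by auto
  then have "lam (i + (N - n)) N = real N"
    using E unfolding eigensteps_def by blast
  ultimately show ?thesis
    using eigensteps_entry_bounds[OF E, of i n] assms by auto
qed

lemma interior_entry_bounds:
  fixes lam :: "nat \<Rightarrow> nat \<Rightarrow> real"
  assumes row: "\<And>i n. i \<in> {1..d} \<Longrightarrow> i \<le> n \<Longrightarrow> n + d + 1 < N + i \<Longrightarrow> lam i n \<le> lam i (Suc n)"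
    and diag: "\<And>i n. i \<in> {2..d} \<Longrightarrow> i \<le> n \<Longrightarrow> n + d < N + i \<Longrightarrow> lam i n \<le> lam (i - 1) (n - 1)"
    and low: "0 \<le> lam d d" and high: "lam 1 (N - d) \<le> real N"
    and i: "i \<in> {1..d}" and n: "i \<le> n" "n + d < N + i"
  shows "0 \<le> lam i n \<and> lam i n \<le> real N"
proof
  have "lam (1 + (i - 1)) (n - i + 1 + (i - 1)) \<le> lam 1 (n - i + 1)"
  proof (rule diagonal_antimono)
    fix k assume "k < i - 1"
    then have "Suc (Suc k) \<in> {2..d}" "Suc (Suc k) \<le> n - i + 2 + k" "n - i + 2 + k + d < N + Suc (Suc k)"
      using i n by auto
    from diag[OF this]
    show "lam (1 + Suc k) (n - i + 1 + Suc k) \<le> lam (1 + k) (n - i + 1 + k)"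
      by (simp add: numeral_2_eq_2)
  qed
  also have "\<dots> \<le> lam 1 (N - d)"
    by (rule lift_Suc_mono_le_ivl[of "{1..<N - d}"]) (use i n in \<open>auto intro: row\<close>)
  finally show "lam i n \<le> real N"
    using i n high by auto
next
  have "lam d d \<le> lam d (n + d - i)"
    by (rule lift_Suc_mono_le_ivl[of "{d..<N - 1}"]) (use i n in \<open>auto intro: row\<close>)
  also have "lam (i + (d - i)) (n + (d - i)) \<le> lam i n"
  proof (rule diagonal_antimono)
    fix k assume "k < d - i"
    then show "lam (i + Suc k) (n + Suc k) \<le> lam (i + k) (n + k)"
      using diag[of "i + Suc k" "n + Suc k"] i n by simp
  qed
  then have "lam d (n + d - i) \<le> lam i n"
    using i n by auto
  finally show "0 \<le> lam i n"
    using low by simp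
qed

context
  fixes N d :: nat and lam :: "nat \<Rightarrow> nat \<Rightarrow> real"
  assumes zero: "\<And>i n. i \<in> {1..d} \<Longrightarrow> n \<le> N \<Longrightarrow> n < i \<Longrightarrow> lam i n = 0"
    and full: "\<And>i n. i \<in> {1..d} \<Longrightarrow> n \<le> N \<Longrightarrow> i + N \<le> n + d \<Longrightarrow> lam i n = real N"
    and row: "\<And>i n. i \<in> {1..d} \<Longrightarrow> i \<le> n \<Longrightarrow> n + d + 1 < N + i \<Longrightarrow> lam i n \<le> lam i (Suc n)"
    and diag: "\<And>i n. i \<in> {2..d} \<Longrightarrow> i \<le> n \<Longrightarrow> n + d < N + i \<Longrightarrow> lam i n \<le> lam (i - 1) (n - 1)"
    and low: "0 \<le> lam d d" and high: "lam 1 (N - d) \<le> real N"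
begin

lemma reduced_entry_bounds:
  assumes i: "i \<in> {1..d}" and n: "n \<le> N"
  shows "0 \<le> lam i n \<and> lam i n \<le> real N"
proof -
  consider "n < i" | "i + N \<le> n + d" | "i \<le> n" "n + d < N + i"
    by linarith
  then show ?thesis
    by cases (use zero full interior_entry_bounds[OF row diag low high] i n in auto)
qed

lemma eigensteps_if_reduced:
  assumes sum: "\<And>n. 0 < n \<Longrightarrow> n < N \<Longrightarrow> (\<Sum>i=1..d. lam i n) = real d * real n"
  shows "eigensteps N d lam"
  unfolding eigensteps_def
proof (intro conjI ballI allI impI)
  fix i assume i: "i \<in> {1..d}"
  show "lam i 0 = 0" "lam i N = real N"
    using zero full i by auto
next
  fix n assume "n \<in> {0..N}"
  then consider "n = 0" | "n = N" | "0 < n" "n < N"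
    by fastforce
  then show "(\<Sum>i=1..d. lam i n) = real d * real n"
  proof cases
    case 3
    then show ?thesis by (rule sum)
  qed (simp_all add: zero full)
next
  fix i n assume i: "i \<in> {1..d}" and n: "n < N"
  consider "n < i" | "i + N \<le> Suc n + d" | "i \<le> n" "n + d + 1 < N + i"
    by linarith
  then show "lam i n \<le> lam i (n + 1)"
    by cases (use zero full row reduced_entry_bounds i n in auto)
next
  fix i n assume i: "i \<in> {2..d}" and n: "n \<in> {1..N}"
  then have i': "i - 1 \<in> {1..d}"
    by auto
  consider "n < i" | "i - 1 + N \<le> n - 1 + d" | "i \<le> n" "n + d < N + i"
    using i n by fastforce
  then show "lam i n \<le> lam (i - 1) (n - 1)"
    by cases (use zero full diag reduced_entry_bounds i i' n in auto)
qed

end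

theorem proposition3p1:
  fixes N d :: nat and lam :: "nat \<Rightarrow> nat \<Rightarrow> real"
  assumes "1 \<le> d" and "d \<le> N"
  shows "eigensteps N d lam \<longleftrightarrow>
    (\<forall>i\<in>{1..d}. \<forall>n\<in>{0..N}. i > n \<longrightarrow> lam i n = 0) \<and>
    (\<forall>i\<in>{1..d}. \<forall>n\<in>{0..N}. int i < int n + int d - int N + 1 \<longrightarrow> lam i n = real N) \<and>
    (\<forall>n. 0 < n \<and> n < N \<longrightarrow> (\<Sum>i=1..d. lam i n) = real d * real n) \<and>
    (\<forall>i\<in>{1..d}. \<forall>n. i \<le> n \<and> int n < int N - int d + int i - 1 \<longrightarrow> lam i n \<le> lam i (n+1)) \<and>
    (\<forall>i\<in>{2..d}. \<forall>n. i \<le> n \<and> int n < int N - int d + int i \<longrightarrow> lam i n \<le> lam (i-1) (n-1)) \<and>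
    lam d d \<ge> 0 \<and>
    lam 1 (N - d) \<le> real N"
proof -
  have nat_bounds: "\<And>i n. int i < int n + int d - int N + 1 \<longleftrightarrow> i + N \<le> n + d"
    "\<And>i n. int n < int N - int d + int i - 1 \<longleftrightarrow> n + d + 1 < N + i"
    "\<And>i n. int n < int N - int d + int i \<longleftrightarrow> n + d < N + i"
    by linarith+
  show ?thesis
    unfolding nat_bounds
  proof (intro iffI conjI)
    assume E: "eigensteps N d lam"
    show "\<forall>i\<in>{1..d}. \<forall>n\<in>{0..N}. i > n \<longrightarrow> lam i n = 0"
      using eigensteps_below_diagonal[OF E] by auto
    show "\<forall>i\<in>{1..d}. \<forall>n\<in>{0..N}. i + N \<le> n + d \<longrightarrow> lam i n = real N"
      using eigensteps_upper_triangle[OF E] by auto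
    show "0 \<le> lam d d" "lam 1 (N - d) \<le> real N"
      using eigensteps_entry_bounds[OF E] assms by auto
    show "\<forall>n. 0 < n \<and> n < N \<longrightarrow> (\<Sum>i=1..d. lam i n) = real d * real n"
      "\<forall>i\<in>{1..d}. \<forall>n. i \<le> n \<and> n + d + 1 < N + i \<longrightarrow> lam i n \<le> lam i (n+1)"
      "\<forall>i\<in>{2..d}. \<forall>n. i \<le> n \<and> n + d < N + i \<longrightarrow> lam i n \<le> lam (i-1) (n-1)"
      using E unfolding eigensteps_def by auto
  qed (elim conjE, rule eigensteps_if_reduced; auto)
qed

end
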